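(* Let $(S,|\cdot|)$ be a finite metric space with $n$ points, let $t\ge1$ be a real number, and let $G'=(S,E')$ be a $t$-spanner for $S$ with $m$ edges. Then for any integer $f$ with $1\le f\le (n-1)/2$, the graph $G=(S,E)$ obtained from $G'$ by the construction in the context is an $f$-faulty-degree $((8f+2)t)$-spanner for $S$ that has at most $(4f-1)m$ edges.
   Context: For a finite metric space $(S,|\cdot|)$, $K_S$ denotes the complete graph on $S$ in which each edge $\{p,q\}$ has weight $|pq|$. All graphs on vertex set $S$ considered have edge weights $|pq|$. For an edge-weighted graph $X$ and vertices $p,q$, $\delta_X(p,q)$ is the length of a shortest path between $p$ and $q$ in $X$ ($+\infty$ if none exists). For a set $F$ of edges, $X\setminus F$ is the graph with the same vertex set as $X$ and edge set $E_X\setminus F$. A graph $G'=(S,E')$ is a $t$-spanner for $S$ if $\delta_{G'}(p,q)\le t|pq|$ for all $p,q\in S$. For an integer $f\ge 0$ and real $t\ge1$, a graph $G=(S,E)$ is an $f$-faulty-degree $t$-spanner for $S$ if for every subset $F\subseteq E$ such that the graph $(S,F)$ has maximum degree at most $f$, and for all $p,q\in S$, $\delta_{G\setminus F}(p,q)\le t\cdot\delta_{K_S\setminus F}(p,q)$. Construction: Let $G'=(S,E')$ be a $t$-spanner for $S$, $n=|S|$, and let $f$ be an integer with $1\le f\le (n-1)/2$. For each edge $\{a,b\}\in E'$, list the points of $S\setminus\{a,b\}$ as $c_1,\dots,c_{n-2}$ in non-decreasing order of $|ac_i|+|c_ib|$ (ties broken arbitrarily) and let $C_{ab}=\{c_1,\dots,c_{2f-1}\}$.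 The graph $G=(S,E)$ has edge set $E=E'\cup\{\{a,c\},\{c,b\}:\{a,b\}\in E',\ c\in C_{ab}\}$. *)

theory Defs
  imports "HOL-Library.Extended_Real"
begin

definition finite_metric_space :: "'a set \<Rightarrow> ('a \<Rightarrow> 'a \<Rightarrow> real) \<Rightarrow> bool" where
  "finite_metric_space S d \<longleftrightarrow> finite S \<and>
     (\<forall>p\<in>S. \<forall>q\<in>S. d p q \<ge> 0 \<and> (d p q = 0 \<longleftrightarrow> p = q) \<and> d p q = d q p) \<and>
     (\<forall>p\<in>S. \<forall>q\<in>S. \<forall>r\<in>S. d p r \<le> d p q + d q r)"

text \<open>Graphs on S are given by edge sets: sets of 2-element subsets {p,q} of S.
  Edge {p,q} has weight d p q.\<close>
definition graph_on :: "'a set \<Rightarrow> 'a set set \<Rightarrow> bool" where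
  "graph_on S E \<longleftrightarrow> E \<subseteq> {{p, q} | p q. p \<in> S \<and> q \<in> S \<and> p \<noteq> q}"

definition complete_edges :: "'a set \<Rightarrow> 'a set set" where
  "complete_edges S = {{p, q} | p q. p \<in> S \<and> q \<in> S \<and> p \<noteq> q}"

definition is_path :: "'a set set \<Rightarrow> 'a \<Rightarrow> 'a \<Rightarrow> 'a list \<Rightarrow> bool" where
  "is_path E p q w \<longleftrightarrow> w \<noteq> [] \<and> hd w = p \<and> last w = q \<and>
     (\<forall>i. Suc i < length w \<longrightarrow> {w ! i, w ! Suc i} \<in> E)"

definition path_length :: "('a \<Rightarrow> 'a \<Rightarrow> real) \<Rightarrow> 'a list \<Rightarrow> real" where
  "path_length d w = (\<Sum>i<length w - 1. d (w ! i) (w ! Suc i))"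

text \<open>Shortest path distance delta_X(p,q); +infinity if no path exists.\<close>
definition sp_dist :: "('a \<Rightarrow> 'a \<Rightarrow> real) \<Rightarrow> 'a set set \<Rightarrow> 'a \<Rightarrow> 'a \<Rightarrow> ereal" where
  "sp_dist d E p q = (INF w \<in> {w. is_path E p q w}. ereal (path_length d w))"

definition is_t_spanner :: "'a set \<Rightarrow> ('a \<Rightarrow> 'a \<Rightarrow> real) \<Rightarrow> real \<Rightarrow> 'a set set \<Rightarrow> bool" where
  "is_t_spanner S d t E \<longleftrightarrow> graph_on S E \<and>
     (\<forall>p\<in>S. \<forall>q\<in>S. sp_dist d E p q \<le> ereal (t * d p q))"

definition degree :: "'a set set \<Rightarrow> 'a \<Rightarrow> nat" where
  "degree F v = card {e \<in> F. v \<in> e}"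

definition fault_degree_spanner ::
  "'a set \<Rightarrow> ('a \<Rightarrow> 'a \<Rightarrow> real) \<Rightarrow> nat \<Rightarrow> real \<Rightarrow> 'a set set \<Rightarrow> bool" where
  "fault_degree_spanner S d f t E \<longleftrightarrow> graph_on S E \<and>
     (\<forall>F. F \<subseteq> E \<and> (\<forall>v\<in>S. degree F v \<le> f) \<longrightarrow>
        (\<forall>p\<in>S. \<forall>q\<in>S. sp_dist d (E - F) p q \<le> ereal t * sp_dist d (complete_edges S - F) p q))"

definition valid_C ::
  "'a set \<Rightarrow> ('a \<Rightarrow> 'a \<Rightarrow> real) \<Rightarrow> nat \<Rightarrow> 'a set set \<Rightarrow> ('a set \<Rightarrow> 'a set) \<Rightarrow> bool" where
  "valid_C S d f E' C \<longleftrightarrow>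
     (\<forall>a b. {a, b} \<in> E' \<longrightarrow>
        (\<exists>cs. distinct cs \<and> set cs = S - {a, b} \<and>
              sorted_wrt (\<lambda>x y. d a x + d x b \<le> d a y + d y b) cs \<and>
              C {a, b} = set (take (2 * f - 1) cs)))"

definition construction :: "'a set set \<Rightarrow> ('a set \<Rightarrow> 'a set) \<Rightarrow> 'a set set" where
  "construction E' C = E' \<union> {e. \<exists>a b c. {a, b} \<in> E' \<and> c \<in> C {a, b} \<and> (e = {a, c} \<or> e = {c, b})}"

end

theory Submission
  imports Defs
begin

text \<open>It suffices to replace every surviving edge \<open>{p, q}\<close> of \<open>K_S\<close> by a fault-free walk of
  length at most \<open>(8 f + 2) t |pq|\<close>. Take a shortest path \<open>x\<^sub>0, \<dots>, x\<^sub>k\<close> from \<open>p\<close> to \<open>q\<close> in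
  \<open>G'\<close>, of length \<open>L \<le> t |pq|\<close>, and bypass each faulty edge \<open>{a, b}\<close> of it by a two-hop detour
  through some \<open>c \<in> C\<^sub>a\<^sub>b\<close>. At most \<open>f - 1\<close> further faults touch \<open>a\<close> and at most \<open>f - 1\<close> touch
  \<open>b\<close>, so one of the \<open>2 f - 1\<close> candidates keeps both of its edges; by the choice of \<open>C\<^sub>a\<^sub>b\<close> its
  detour is no longer than the detour through any of \<open>2 f - 1\<close> other points of \<open>S\<close>. If \<open>k \<ge> 2 f\<close>
  these points are taken from a window of \<open>2 f\<close> consecutive path edges around \<open>{a, b}\<close>, and every
  edge lies in at most \<open>4 f - 1\<close> windows, giving length \<open>(8 f - 1) L\<close>; if \<open>k < 2 f\<close> they are
  taken from \<open>C\<^sub>x\<^sub>0\<^sub>x\<^sub>1 \<union> {x\<^sub>0, x\<^sub>1}\<close>, each detour costs at most \<open>4 L\<close>, and there are fewer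
  than \<open>2 f\<close> of them.\<close>

fun walk :: "'a set set \<Rightarrow> 'a list \<Rightarrow> bool" where
  "walk E [] = False"
| "walk E [x] = True"
| "walk E (x # y # xs) \<longleftrightarrow> {x, y} \<in> E \<and> walk E (y # xs)"

fun walk_length :: "('a \<Rightarrow> 'a \<Rightarrow> real) \<Rightarrow> 'a list \<Rightarrow> real" where
  "walk_length d [] = 0"
| "walk_length d [x] = 0"
| "walk_length d (x # y # xs) = d x y + walk_length d (y # xs)"

lemma walk_iff_nth:
  "walk E w \<longleftrightarrow> w \<noteq> [] \<and> (\<forall>i. Suc i < length w \<longrightarrow> {w ! i, w ! Suc i} \<in> E)"
  by (induction E w rule: walk.induct) (auto simp: less_Suc_eq_0_disj)

lemma is_path_iff_walk: "is_path E p q w \<longleftrightarrow> walk E w \<and> hd w = p \<and> last w = q"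
  unfolding is_path_def walk_iff_nth by auto

lemma walk_length_eq_path_length: "walk_length d w = path_length d w"
proof (induction d w rule: walk_length.induct)
  case (3 d x y xs)
  have "path_length d (x # y # xs) = (\<Sum>i<Suc (length xs). d ((x # y # xs) ! i) ((x # y # xs) ! Suc i))"
    by (simp add: path_length_def)
  also have "\<dots> = d x y + (\<Sum>i<length xs. d ((y # xs) ! i) ((y # xs) ! Suc i))"
    by (subst sum.lessThan_Suc_shift) simp
  finally show ?case using 3 by (simp add: path_length_def)
qed (auto simp: path_length_def)

lemma walk_append_Cons_iff:
  "walk E (xs @ y # ys) \<longleftrightarrow> walk E (xs @ [y]) \<and> walk E (y # ys)"
proof (induction xs)
  case (Cons a xs)
  then show ?case by (cases xs) auto
qed simp

lemma walk_length_append_Cons: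
  "walk_length d (xs @ y # ys) = walk_length d (xs @ [y]) + walk_length d (y # ys)"
proof (induction xs)
  case (Cons a xs)
  then show ?case by (cases xs) auto
qed simp

lemma walk_join:
  assumes "walk E w1" "walk E w2" "last w1 = hd w2"
  shows "walk E (w1 @ tl w2) \<and> hd (w1 @ tl w2) = hd w1 \<and> last (w1 @ tl w2) = last w2
    \<and> walk_length d (w1 @ tl w2) = walk_length d w1 + walk_length d w2"
proof -
  obtain y ys where w2: "w2 = y # ys" using assms(2) by (cases w2) auto
  obtain xs where w1: "w1 = xs @ [y]"
    using assms(1,3) w2 by (metis append_butlast_last_id list.sel(1) walk.simps(1))
  show ?thesis
    using assms w1 w2 walk_append_Cons_iff[of E xs y ys] walk_length_append_Cons[of d xs y ys]
    by (cases xs) auto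
qed

lemma walk_chain:
  assumes "\<And>i. i < k \<Longrightarrow>
    \<exists>w. walk E w \<and> hd w = x i \<and> last w = x (Suc i) \<and> walk_length d w \<le> c i"
  shows "\<exists>w. walk E w \<and> hd w = x 0 \<and> last w = x k \<and> walk_length d w \<le> (\<Sum>i<k. c i)"
  using assms
proof (induction k)
  case 0
  show ?case by (intro exI[of _ "[x 0]"]) simp
next
  case (Suc k)
  obtain w1 where w1: "walk E w1" "hd w1 = x 0" "last w1 = x k" "walk_length d w1 \<le> (\<Sum>i<k. c i)"
    using Suc by auto
  obtain w2 where w2: "walk E w2" "hd w2 = x k" "last w2 = x (Suc k)" "walk_length d w2 \<le> c k"
    using Suc.prems[of k] by auto
  show ?case
    using walk_join[OF w1(1) w2(1), of d] w1 w2 by (intro exI[of _ "w1 @ tl w2"]) auto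
qed

lemma walk_stretch:
  assumes edge: "\<And>x y. {x, y} \<in> E1 \<Longrightarrow>
      \<exists>u. walk E2 u \<and> hd u = x \<and> last u = y \<and> walk_length d u \<le> T * d x y"
  shows "walk E1 w \<Longrightarrow> \<exists>w'. walk E2 w' \<and> hd w' = hd w \<and> last w' = last w
      \<and> walk_length d w' \<le> T * walk_length d w"
proof (induction w rule: induct_list012)
  case (2 x)
  show ?case by (intro exI[of _ "[x]"]) simp
next
  case (3 x y xs)
  obtain w'' where w'': "walk E2 w''" "hd w'' = y" "last w'' = last (y # xs)"
      "walk_length d w'' \<le> T * walk_length d (y # xs)"
    using "3.IH"(2) "3.prems" by auto
  obtain u where u: "walk E2 u" "hd u = x" "last u = y" "walk_length d u \<le> T * d x y"
    using edge "3.prems" by auto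
  show ?case
    using walk_join[OF u(1) w''(1), of d] u w'' by (intro exI[of _ "u @ tl w''"]) (auto simp: algebra_simps)
qed simp

lemma walk_length_nonneg:
  "walk E w \<Longrightarrow> (\<And>x y. {x, y} \<in> E \<Longrightarrow> 0 \<le> d x y) \<Longrightarrow> 0 \<le> walk_length d w"
  by (induction E w rule: walk.induct) auto

lemma walk_shortcut:
  assumes "walk E w" "\<And>x y. {x, y} \<in> E \<Longrightarrow> 0 \<le> d x y"
  shows "\<exists>w'. walk E w' \<and> distinct w' \<and> hd w' = hd w \<and> last w' = last w
    \<and> walk_length d w' \<le> walk_length d w"
  using assms(1)
proof (induction "length w" arbitrary: w rule: less_induct)
  case less
  show ?case
  proof (cases "distinct w")
    case False
    then obtain xs ys zs y where w: "w = xs @ y # (ys @ [y]) @ zs"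
      using not_distinct_decomp by fastforce
    let ?u = "xs @ y # zs"
    have "walk E (xs @ [y])" "walk E (y # ys @ [y])" "walk E (y # zs)"
      using less.prems walk_append_Cons_iff[of E xs y "(ys @ [y]) @ zs"]
        walk_append_Cons_iff[of E "y # ys" y zs] unfolding w by auto
    moreover have "walk_length d w = walk_length d ?u + walk_length d (y # ys @ [y])"
      using walk_length_append_Cons[of d xs y "(ys @ [y]) @ zs"]
        walk_length_append_Cons[of d "y # ys" y zs] walk_length_append_Cons[of d xs y zs]
      unfolding w by simp
    ultimately have u: "walk E ?u" "walk_length d ?u \<le> walk_length d w"
      using walk_append_Cons_iff[of E xs y zs] walk_length_nonneg[OF _ assms(2)] by auto
    have "hd ?u = hd w" "last ?u = last w" "length ?u < length w"
      unfolding w by (cases xs; simp)+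
    then show ?thesis using less.hyps[OF _ u(1)] u(2) by fastforce
  qed (use less.prems in blast)
qed

lemma walk_set_subset:
  "walk E w \<Longrightarrow> hd w \<in> S \<Longrightarrow> (\<And>x y. {x, y} \<in> E \<Longrightarrow> x \<in> S \<and> y \<in> S) \<Longrightarrow> set w \<subseteq> S"
  by (induction E w rule: walk.induct) auto

lemma sp_dist_no_path: "\<not> (\<exists>w. is_path E p q w) \<Longrightarrow> sp_dist d E p q = \<infinity>"
  unfolding sp_dist_def by (simp add: top_ereal_def[symmetric])

text \<open>Shortcutting cycles leaves finitely many candidate paths, so the infimum is a minimum.\<close>
lemma sp_dist_attained:
  assumes "finite S" "p \<in> S" "\<And>x y. {x, y} \<in> E \<Longrightarrow> x \<in> S \<and> y \<in> S"
    and "\<And>x y. x \<in> S \<Longrightarrow> y \<in> S \<Longrightarrow> 0 \<le> d x y" and "\<exists>w. is_path E p q w"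
  shows "\<exists>w0. is_path E p q w0 \<and> distinct w0 \<and> sp_dist d E p q = ereal (path_length d w0)"
proof -
  have nonneg: "\<And>x y. {x, y} \<in> E \<Longrightarrow> 0 \<le> d x y" using assms(3,4) by blast
  let ?D = "{w. is_path E p q w \<and> distinct w}"
  have shortcut: "\<exists>w'\<in>?D. path_length d w' \<le> path_length d w" if "is_path E p q w" for w
    using that walk_shortcut[of E w d, OF _ nonneg]
    by (fastforce simp: is_path_iff_walk walk_length_eq_path_length)
  have "?D \<subseteq> {xs. set xs \<subseteq> S \<and> distinct xs}"
    using walk_set_subset[of E _ S] assms(2,3) by (auto simp: is_path_iff_walk)
  then have fin: "finite (path_length d ` ?D)"
    using finite_subset_distinct[OF assms(1)] finite_subset by blast
  have "?D \<noteq> {}" using assms(5) shortcut by blast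
  then obtain w0 where w0: "w0 \<in> ?D" "path_length d w0 = Min (path_length d ` ?D)"
    using Min_in[OF fin] by fastforce
  have "path_length d w0 \<le> path_length d w" if "is_path E p q w" for w
    using shortcut[OF that] Min_le[OF fin] w0(2) by force
  then have "sp_dist d E p q = ereal (path_length d w0)"
    unfolding sp_dist_def using w0(1) by (intro antisym INF_lower2[of w0] INF_greatest) auto
  then show ?thesis using w0(1) by blast
qed

lemma sp_dist_le_stretch:
  assumes "finite S" "p \<in> S" "\<And>x y. {x, y} \<in> E1 \<Longrightarrow> x \<in> S \<and> y \<in> S"
    and "\<And>x y. x \<in> S \<Longrightarrow> y \<in> S \<Longrightarrow> 0 \<le> d x y" and "0 < T"
    and edge: "\<And>x y. {x, y} \<in> E1 \<Longrightarrow>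
      \<exists>u. walk E2 u \<and> hd u = x \<and> last u = y \<and> walk_length d u \<le> T * d x y"
  shows "sp_dist d E2 p q \<le> ereal T * sp_dist d E1 p q"
proof (cases "\<exists>w. is_path E1 p q w")
  case True
  obtain w0 where w0: "is_path E1 p q w0" "sp_dist d E1 p q = ereal (path_length d w0)"
    using sp_dist_attained[of S p E1 d q] assms(1-4) True by blast
  obtain w where w: "is_path E2 p q w" "path_length d w \<le> T * path_length d w0"
    using walk_stretch[OF edge, where w=w0] w0(1) by (auto simp: is_path_iff_walk walk_length_eq_path_length)
  have "sp_dist d E2 p q \<le> ereal (path_length d w)"
    unfolding sp_dist_def using w(1) by (intro INF_lower) simp
  also have "\<dots> \<le> ereal T * sp_dist d E1 p q" using w(2) w0(2) by simp
  finally show ?thesis .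
next
  case False
  then show ?thesis using sp_dist_no_path[OF False] assms(5) by simp
qed

lemma graph_on_iff_subset_complete_edges: "graph_on S E \<longleftrightarrow> E \<subseteq> complete_edges S"
  unfolding graph_on_def complete_edges_def by simp

lemma doubleton_in_complete_edges_iff: "{x, y} \<in> complete_edges S \<longleftrightarrow> x \<in> S \<and> y \<in> S \<and> x \<noteq> y"
  unfolding complete_edges_def by (auto simp: doubleton_eq_iff)

lemma card_neighbours_less_degree:
  assumes "finite F" "{a, b} \<in> F" "a \<notin> A" "b \<notin> A"
  shows "card {c \<in> A. {a, c} \<in> F} < degree F a"
proof -
  have "{a, b} \<notin> (\<lambda>c. {a, c}) ` {c \<in> A. {a, c} \<in> F}"
    using assms(3,4) by (auto simp: doubleton_eq_iff)
  then have "(\<lambda>c. {a, c}) ` {c \<in> A. {a, c} \<in> F} \<subset> {e \<in> F. a \<in> e}"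
    using assms(2) by blast
  then have "card ((\<lambda>c. {a, c}) ` {c \<in> A. {a, c} \<in> F}) < degree F a"
    unfolding degree_def using assms(1) by (intro psubset_card_mono) auto
  moreover have "inj_on (\<lambda>c. {a, c}) {c \<in> A. {a, c} \<in> F}"
    using assms(3) by (auto simp: inj_on_def doubleton_eq_iff)
  ultimately show ?thesis by (simp add: card_image)
qed

lemma dist_le_segment_sum:
  assumes "finite_metric_space S d" "\<And>m. m \<le> hi \<Longrightarrow> x m \<in> S"
    and "lo \<le> i" "i \<le> hi" "lo \<le> j" "j \<le> hi"
  shows "d (x i) (x j) \<le> (\<Sum>m\<in>{lo..<hi}. d (x m) (x (Suc m)))"
proof -
  have metric: "\<And>u v. u \<in> S \<Longrightarrow> v \<in> S \<Longrightarrow> 0 \<le> d u v \<and> d u u = 0 \<and> d u v = d v u"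
    and triangle: "\<And>u v w. u \<in> S \<Longrightarrow> v \<in> S \<Longrightarrow> w \<in> S \<Longrightarrow> d u w \<le> d u v + d v w"
    using assms(1) unfolding finite_metric_space_def by auto
  have forward: "d (x i) (x j) \<le> (\<Sum>m\<in>{i..<j}. d (x m) (x (Suc m)))" if "i \<le> j" "j \<le> hi" for i j
    using that
  proof (induction j)
    case (Suc j)
    show ?case
    proof (cases "i = Suc j")
      case False
      then have "d (x i) (x (Suc j)) \<le> d (x i) (x j) + d (x j) (x (Suc j))"
        using Suc.prems by (intro triangle assms(2)) auto
      then show ?thesis using Suc False by simp
    qed (use Suc.prems metric[of "x i" "x i"] assms(2)[of i] in simp)
  qed (use metric[of "x 0" "x 0"] assms(2)[of 0] in simp)
  have widen: "(\<Sum>m\<in>{i..<j}. d (x m) (x (Suc m))) \<le> (\<Sum>m\<in>{lo..<hi}. d (x m) (x (Suc m)))"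
    if "lo \<le> i" "j \<le> hi" for i j
    using that metric assms(2) by (intro sum_mono2) auto
  show ?thesis
  proof (cases "i \<le> j")
    case True
    then show ?thesis using forward widen assms(3-6) order_trans by blast
  next
    case False
    then have "d (x i) (x j) = d (x j) (x i)" using metric assms(2,4,6) by simp
    then show ?thesis using forward[of j i] widen[of j i] False assms(3-6) by simp
  qed
qed

text \<open>Each summand \<open>e m\<close> lies in at most \<open>2 w - 1\<close> of the \<open>k\<close> windows, whose start indices form
  an interval of that length.\<close>
lemma sum_sliding_windows_le:
  fixes e :: "nat \<Rightarrow> real"
  assumes "\<And>m. m < k \<Longrightarrow> 0 \<le> e m" "0 < w" "w \<le> k"
  shows "(\<Sum>i<k. \<Sum>m\<in>{min i (k - w)..<min i (k - w) + w}. e m) \<le> (2 * real w - 1) * (\<Sum>m<k. e m)"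
proof -
  define s where "s i = min i (k - w)" for i
  define R where "R i m \<longleftrightarrow> s i \<le> m \<and> m < s i + w" for i m
  have window: "{s i..<s i + w} = {m \<in> {..<k}. R i m}" if "i < k" for i
    using that assms(3) unfolding s_def R_def by auto
  have multiplicity: "real (card {i \<in> {..<k}. R i m}) \<le> 2 * real w - 1" for m
  proof -
    have "{i \<in> {..<k}. R i m} \<subseteq> {m + 1 - w..<m + w}"
      unfolding R_def s_def by auto
    then have "card {i \<in> {..<k}. R i m} \<le> card {m + 1 - w..<m + w}"
      by (intro card_mono) auto
    then have "card {i \<in> {..<k}. R i m} \<le> 2 * w - 1" by simp
    then show ?thesis using assms(2) by (simp add: of_nat_diff)
  qed
  have "(\<Sum>i<k. \<Sum>m\<in>{s i..<s i + w}. e m) = (\<Sum>i<k. \<Sum>m\<in>{m \<in> {..<k}. R i m}. e m)"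
    using window by (intro sum.cong) auto
  also have "\<dots> = (\<Sum>m<k. real (card {i \<in> {..<k}. R i m}) * e m)"
    by (subst sum.swap_restrict) auto
  also have "\<dots> \<le> (\<Sum>m<k. (2 * real w - 1) * e m)"
    using multiplicity assms(1,2)
    by (intro sum_mono mult_right_mono) auto
  finally show ?thesis unfolding s_def by (simp add: sum_distrib_left)
qed

lemma construction_subset_spokes:
  "construction E' C \<subseteq> (\<Union>e\<in>E'. insert e (\<Union>a\<in>e. (\<lambda>c. {a, c}) ` C e))"
proof
  fix e' assume "e' \<in> construction E' C"
  then consider "e' \<in> E'" | a b c where "{a, b} \<in> E'" "c \<in> C {a, b}" "e' = {a, c} \<or> e' = {b, c}"
    unfolding construction_def by (auto simp: insert_commute)
  then show "e' \<in> (\<Union>e\<in>E'. insert e (\<Union>a\<in>e. (\<lambda>c. {a, c}) ` C e))"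
    by cases blast+
qed

lemma card_construction_le:
  assumes "finite E'" "\<And>e. e \<in> E' \<Longrightarrow> card e = 2"
    and "\<And>e. e \<in> E' \<Longrightarrow> finite (C e) \<and> card (C e) \<le> k"
  shows "card (construction E' C) \<le> (2 * k + 1) * card E'"
proof -
  define spokes where "spokes e = (\<Union>a\<in>e. (\<lambda>c. {a, c}) ` C e)" for e
  have spokes: "finite (spokes e) \<and> card (spokes e) \<le> 2 * k" if "e \<in> E'" for e
  proof -
    have e: "finite e" "card e = 2" using assms(2)[OF that] by (auto intro: card_ge_0_finite)
    have "card (spokes e) \<le> (\<Sum>a\<in>e. card ((\<lambda>c. {a, c}) ` C e))"
      unfolding spokes_def using e(1) by (rule card_UN_le)
    also have "\<dots> \<le> (\<Sum>a\<in>e. k)"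
      using assms(3)[OF that] card_image_le le_trans by (intro sum_mono) blast
    finally show ?thesis using e assms(3)[OF that] by (simp add: spokes_def)
  qed
  have card_insert: "card (insert e (spokes e)) \<le> 2 * k + 1" if "e \<in> E'" for e
    using spokes[OF that] by (simp add: card_insert_if)
  have "card (construction E' C) \<le> card (\<Union>e\<in>E'. insert e (spokes e))"
    using assms(1) spokes construction_subset_spokes[of E' C]
    by (intro card_mono) (simp_all add: spokes_def)
  also have "\<dots> \<le> (\<Sum>e\<in>E'. card (insert e (spokes e)))"
    using assms(1) by (rule card_UN_le)
  also have "\<dots> \<le> (\<Sum>e\<in>E'. 2 * k + 1)"
    using card_insert by (rule sum_mono)
  finally show ?thesis by (simp add: algebra_simps)
qed

locale spanner_construction =
  fixes S :: "'a set" and d :: "'a \<Rightarrow> 'a \<Rightarrow> real" and t :: real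
    and E' :: "'a set set" and f :: nat and C :: "'a set \<Rightarrow> 'a set"
  assumes metric: "finite_metric_space S d" and t_ge_1: "1 \<le> t"
    and spanner: "is_t_spanner S d t E'"
    and f_ge_1: "1 \<le> f" and card_S: "2 * f + 1 \<le> card S"
    and valid: "valid_C S d f E' C"
begin

abbreviation E :: "'a set set" where "E \<equiv> construction E' C"

definition fault_set :: "'a set set \<Rightarrow> bool" where
  "fault_set F \<longleftrightarrow> F \<subseteq> E \<and> (\<forall>v\<in>S. degree F v \<le> f)"

lemma finite_S: "finite S"
  and dist_nonneg: "x \<in> S \<Longrightarrow> y \<in> S \<Longrightarrow> 0 \<le> d x y"
  and dist_self: "x \<in> S \<Longrightarrow> d x x = 0"
  and dist_triangle: "x \<in> S \<Longrightarrow> y \<in> S \<Longrightarrow> z \<in> S \<Longrightarrow> d x z \<le> d x y + d y z"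
  using metric unfolding finite_metric_space_def by simp_all

lemma spanner_subset_complete_edges: "E' \<subseteq> complete_edges S"
  using spanner by (simp add: is_t_spanner_def graph_on_iff_subset_complete_edges)

lemma spanner_edge: "{a, b} \<in> E' \<Longrightarrow> a \<in> S \<and> b \<in> S \<and> a \<noteq> b"
  using spanner_subset_complete_edges by (auto simp flip: doubleton_in_complete_edges_iff)

lemma
  assumes "{a, b} \<in> E'"
  shows C_subset: "C {a, b} \<subseteq> S - {a, b}"
    and card_C: "card (C {a, b}) = 2 * f - 1"
    and C_minimal: "\<And>c z. c \<in> C {a, b} \<Longrightarrow> z \<in> S - {a, b} - C {a, b} \<Longrightarrow>
      d a c + d c b \<le> d a z + d z b"
proof -
  obtain cs where cs: "distinct cs" "set cs = S - {a, b}"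
    "sorted_wrt (\<lambda>x y. d a x + d x b \<le> d a y + d y b) cs" "C {a, b} = set (take (2 * f - 1) cs)"
    using valid assms unfolding valid_C_def by blast
  have "length cs = card S - 2"
    using distinct_card[OF cs(1)] cs(2) spanner_edge[OF assms] finite_S by (simp add: card_Diff_subset)
  then have "2 * f - 1 \<le> length cs" using card_S by linarith
  then show "card (C {a, b}) = 2 * f - 1"
    using cs(4) distinct_card[OF distinct_take[OF cs(1)]] by simp
  show "C {a, b} \<subseteq> S - {a, b}" using cs(2,4) set_take_subset by metis
  fix c z assume "c \<in> C {a, b}" "z \<in> S - {a, b} - C {a, b}"
  moreover have "set cs = set (take (2 * f - 1) cs) \<union> set (drop (2 * f - 1) cs)"
    by (metis append_take_drop_id set_append)
  moreover have "sorted_wrt (\<lambda>x y. d a x + d x b \<le> d a y + d y b) (take (2 * f - 1) cs @ drop (2 * f - 1) cs)"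
    using cs(3) by simp
  ultimately show "d a c + d c b \<le> d a z + d z b"
    unfolding sorted_wrt_append using cs(2,4) by blast
qed

lemma spanner_subset_construction: "E' \<subseteq> E"
  unfolding construction_def by blast

lemma spokes_in_construction: "{a, b} \<in> E' \<Longrightarrow> c \<in> C {a, b} \<Longrightarrow> {a, c} \<in> E \<and> {c, b} \<in> E"
  unfolding construction_def by blast

lemma construction_subset_complete_edges: "E \<subseteq> complete_edges S"
proof
  fix e assume "e \<in> E"
  then consider "e \<in> E'" | a b c where "{a, b} \<in> E'" "c \<in> C {a, b}" "e = {a, c} \<or> e = {c, b}"
    unfolding construction_def by blast
  then show "e \<in> complete_edges S"
  proof cases
    case 1
    then show ?thesis using spanner_subset_complete_edges by blast
  next
    case 2
    then show ?thesis
      using C_subset[OF 2(1)] spanner_edge[OF 2(1)] by (auto simp: doubleton_in_complete_edges_iff)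
  qed
qed

lemma finite_construction: "finite E"
proof -
  have "complete_edges S \<subseteq> Pow S" unfolding complete_edges_def by blast
  then show ?thesis
    using construction_subset_complete_edges finite_S by (meson finite_Pow_iff finite_subset)
qed

text \<open>The faults at \<open>a\<close> and at \<open>b\<close> other than \<open>{a, b}\<close> itself number at most \<open>2 f - 2\<close>,
  so they cannot block all \<open>2 f - 1\<close> detours.\<close>
lemma surviving_detour:
  assumes "fault_set F" "{a, b} \<in> E'" "{a, b} \<in> F"
  shows "\<exists>c\<in>C {a, b}. {a, c} \<notin> F \<and> {c, b} \<notin> F"
proof -
  let ?C = "C {a, b}"
  define Ka where "Ka = {c \<in> ?C. {a, c} \<in> F}"
  define Kb where "Kb = {c \<in> ?C. {b, c} \<in> F}"
  have "F \<subseteq> E" and degree: "\<forall>v\<in>S. degree F v \<le> f"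
    using assms(1) unfolding fault_set_def by auto
  then have "finite F" using finite_construction finite_subset by blast
  have ab: "a \<notin> ?C" "b \<notin> ?C" "a \<in> S" "b \<in> S"
    using C_subset[OF assms(2)] spanner_edge[OF assms(2)] by auto
  have "card Ka < degree F a"
    unfolding Ka_def using \<open>finite F\<close> assms(3) ab(1,2) by (rule card_neighbours_less_degree)
  moreover have "card Kb < degree F b"
    unfolding Kb_def using \<open>finite F\<close> assms(3) ab(1,2)
    by (intro card_neighbours_less_degree) (simp_all add: insert_commute)
  moreover have "degree F a \<le> f" "degree F b \<le> f" using degree ab(3,4) by auto
  ultimately have "card (Ka \<union> Kb) < card ?C"
    using card_C[OF assms(2)] card_Un_le[of Ka Kb] by linarith
  moreover have finite_C: "finite ?C" using C_subset[OF assms(2)] finite_S finite_subset by blast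
  moreover have "finite (Ka \<union> Kb)" using finite_C by (simp add: Ka_def Kb_def)
  ultimately have "\<not> ?C \<subseteq> Ka \<union> Kb" using card_mono leD by metis
  then obtain c where "c \<in> ?C" "c \<notin> Ka" "c \<notin> Kb" by blast
  moreover have "{c, b} = {b, c}" by (rule insert_commute)
  ultimately show ?thesis unfolding Ka_def Kb_def by auto
qed

lemma detour_cost_le:
  assumes "{a, b} \<in> E'" "c \<in> C {a, b}"
    and "Z \<subseteq> S - {a, b}" "2 * f - 1 \<le> card Z" "\<forall>z\<in>Z. d a z + d z b \<le> R"
  shows "d a c + d c b \<le> R"
proof (cases "Z \<subseteq> C {a, b}")
  case True
  have "finite (C {a, b})" using C_subset[OF assms(1)] finite_S finite_subset by blast
  moreover have "card Z = card (C {a, b})"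
    using card_mono[OF _ True] calculation assms(4) card_C[OF assms(1)] by linarith
  ultimately have "Z = C {a, b}" using True card_subset_eq by blast
  then show ?thesis using assms(2,5) by blast
next
  case False
  then obtain z where z: "z \<in> Z" "z \<notin> C {a, b}" by blast
  then have "d a c + d c b \<le> d a z + d z b" using assms(3) by (intro C_minimal[OF assms(1,2)]) blast
  also have "\<dots> \<le> R" using z(1) assms(5) by blast
  finally show ?thesis .
qed

lemma detour_walk:
  assumes "fault_set F" "{a, b} \<in> E'" "0 \<le> R"
    and "Z \<subseteq> S - {a, b}" "2 * f - 1 \<le> card Z" "\<forall>z\<in>Z. d a z + d z b \<le> R"
  shows "\<exists>w. walk (E - F) w \<and> hd w = a \<and> last w = b \<and> walk_length d w \<le> d a b + R"
proof (cases "{a, b} \<in> F")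
  case True
  then obtain c where c: "c \<in> C {a, b}" "{a, c} \<notin> F" "{c, b} \<notin> F"
    using surviving_detour assms(1,2) by blast
  have "d a c + d c b \<le> R" using detour_cost_le[OF assms(2) c(1) assms(4-6)] .
  moreover have "0 \<le> d a b" using spanner_edge[OF assms(2)] dist_nonneg by blast
  ultimately show ?thesis
    using c spokes_in_construction[OF assms(2) c(1)] by (intro exI[of _ "[a, c, b]"]) auto
next
  case False
  then show ?thesis
    using assms(2,3) spanner_subset_construction by (intro exI[of _ "[a, b]"]) auto
qed

lemma path_vertex_in_S:
  assumes "\<And>i. i < k \<Longrightarrow> {x i, x (Suc i)} \<in> E'" "0 < k" "i \<le> k"
  shows "x i \<in> S"
proof (cases "i < k")
  case True
  then show ?thesis using spanner_edge assms(1) by blast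
next
  case False
  then have "i = Suc (k - 1)" using assms(2,3) by simp
  then show ?thesis using spanner_edge[OF assms(1)[of "k - 1"]] assms(2) by simp
qed

lemma path_dist_le_length:
  assumes path: "\<And>i. i < k \<Longrightarrow> {x i, x (Suc i)} \<in> E'" and "0 < k" "i \<le> k" "j \<le> k"
  shows "d (x i) (x j) \<le> (\<Sum>m<k. d (x m) (x (Suc m)))"
  using dist_le_segment_sum[OF metric, where x = x and hi = k and lo = 0 and i = i and j = j]
    path_vertex_in_S[where k = k and x = x, OF path assms(2)] assms(3,4)
  by (simp add: atLeast0LessThan)

text \<open>The \<open>2 f - 1\<close> vertices of the window other than \<open>x i\<close>, \<open>x (i + 1)\<close> serve as the
  comparison points for the detour around \<open>{x i, x (i + 1)}\<close>.\<close>
lemma window_edge_detour: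
  assumes F: "fault_set F" and path: "\<And>i. i < k \<Longrightarrow> {x i, x (Suc i)} \<in> E'"
    and inj: "inj_on x {..k}" and window: "s \<le> i" "Suc i \<le> s + 2 * f" "s + 2 * f \<le> k"
  shows "\<exists>u. walk (E - F) u \<and> hd u = x i \<and> last u = x (Suc i) \<and>
    walk_length d u \<le> d (x i) (x (Suc i)) + 2 * (\<Sum>m\<in>{s..<s + 2 * f}. d (x m) (x (Suc m)))"
proof -
  define W where "W = (\<Sum>m\<in>{s..<s + 2 * f}. d (x m) (x (Suc m)))"
  let ?I = "{s..s + 2 * f}"
  let ?Z = "x ` ?I - {x i, x (Suc i)}"
  have xS: "x j \<in> S" if "j \<le> k" for j
    using path_vertex_in_S[where k = k and x = x, OF path _ that] window by simp
  have "card (x ` ?I) = 2 * f + 1"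
    using inj window by (subst card_image) (auto intro: inj_on_subset)
  moreover have "x i \<noteq> x (Suc i)" using inj_onD[OF inj, of i "Suc i"] window by auto
  then have "card {x i, x (Suc i)} = 2" by simp
  moreover have "{x i, x (Suc i)} \<subseteq> x ` ?I" using window by auto
  ultimately have "card ?Z = 2 * f - 1" by (simp add: card_Diff_subset)
  moreover have "?Z \<subseteq> S - {x i, x (Suc i)}" using xS window by auto
  moreover have "d (x i) z + d z (x (Suc i)) \<le> 2 * W" if z: "z \<in> ?Z" for z
  proof -
    obtain j where j: "j \<in> ?I" "z = x j" using z by blast
    have "d (x i) (x j) \<le> W" "d (x j) (x (Suc i)) \<le> W"
      unfolding W_def using j(1) window xS by (auto intro!: dist_le_segment_sum[OF metric])
    then show ?thesis using j(2) by simp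
  qed
  moreover have "0 \<le> 2 * W" unfolding W_def using xS window dist_nonneg by (auto intro: sum_nonneg)
  ultimately show ?thesis using detour_walk[OF F path, of i "2 * W" ?Z] window unfolding W_def by auto
qed

text \<open>Every path edge gets a window of \<open>2 f\<close> consecutive edges around it, and every edge lies in
  at most \<open>4 f - 1\<close> windows.\<close>
lemma long_path_detour:
  assumes F: "fault_set F" and path: "\<And>i. i < k \<Longrightarrow> {x i, x (Suc i)} \<in> E'"
    and inj: "inj_on x {..k}" and long: "2 * f \<le> k"
  shows "\<exists>w. walk (E - F) w \<and> hd w = x 0 \<and> last w = x k \<and>
    walk_length d w \<le> (8 * real f - 1) * (\<Sum>m<k. d (x m) (x (Suc m)))"
proof -
  define e where "e m = d (x m) (x (Suc m))" for m
  define s where "s i = min i (k - 2 * f)" for i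
  define W where "W i = (\<Sum>m\<in>{s i..<s i + 2 * f}. e m)" for i
  have "\<exists>u. walk (E - F) u \<and> hd u = x i \<and> last u = x (Suc i) \<and> walk_length d u \<le> e i + 2 * W i"
    if "i < k" for i
    using window_edge_detour[where k = k and x = x, OF F path inj, of "s i" i] that long f_ge_1
    unfolding e_def W_def s_def by auto
  then obtain w where w: "walk (E - F) w" "hd w = x 0" "last w = x k"
      "walk_length d w \<le> (\<Sum>i<k. e i + 2 * W i)"
    using walk_chain[of k "E - F" x d "\<lambda>i. e i + 2 * W i"] by blast
  have "\<And>m. m < k \<Longrightarrow> 0 \<le> e m"
    unfolding e_def using path_vertex_in_S[where k = k and x = x, OF path] dist_nonneg by simp
  then have "(\<Sum>i<k. W i) \<le> (4 * real f - 1) * (\<Sum>m<k. e m)"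
    unfolding W_def s_def using sum_sliding_windows_le[of k e "2 * f"] long f_ge_1 by simp
  then have "(\<Sum>i<k. e i + 2 * W i) \<le> (\<Sum>m<k. e m) + 2 * ((4 * real f - 1) * (\<Sum>m<k. e m))"
    by (simp add: sum.distrib sum_distrib_left[symmetric])
  also have "\<dots> = (8 * real f - 1) * (\<Sum>m<k. e m)" by (simp add: algebra_simps)
  finally show ?thesis using w unfolding e_def by auto
qed

text \<open>Points of \<open>C {x 0, x 1}\<close> are as close to \<open>x 0\<close> and \<open>x 1\<close> as the endpoint \<open>x k\<close> is.\<close>
lemma first_edge_detour_le:
  assumes path: "\<And>i. i < k \<Longrightarrow> {x i, x (Suc i)} \<in> E'" and inj: "inj_on x {..k}"
    and "2 \<le> k" and far: "x k \<notin> C {x 0, x 1}" and z: "z \<in> C {x 0, x 1} \<union> {x 0, x 1}"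
  shows "d (x 0) z + d z (x 1) \<le> 2 * (\<Sum>m<k. d (x m) (x (Suc m)))"
proof -
  have near: "d (x i) (x j) \<le> (\<Sum>m<k. d (x m) (x (Suc m)))" if "i \<le> k" "j \<le> k" for i j
    using path_dist_le_length[where k = k and x = x, OF path _ that] assms(3) by simp
  have xS: "x i \<in> S" if "i \<le> k" for i
    using path_vertex_in_S[where k = k and x = x, OF path _ that] assms(3) by simp
  have L: "0 \<le> (\<Sum>m<k. d (x m) (x (Suc m)))" using near[of 0 0] dist_self[OF xS[of 0]] by simp
  consider "z \<in> C {x 0, x 1}" | "z = x 0" | "z = x 1" using z by blast
  then show ?thesis
  proof cases
    case 1
    have "x k \<noteq> x 0" "x k \<noteq> x 1" using inj assms(3) unfolding inj_on_def by fastforce+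
    then have "x k \<in> S - {x 0, x 1} - C {x 0, x 1}" using xS far by simp
    then have "d (x 0) z + d z (x 1) \<le> d (x 0) (x k) + d (x k) (x 1)"
      using C_minimal[OF _ 1] path[of 0] assms(3) by simp
    then show ?thesis using near[of 0 k] near[of k 1] assms(3) by simp
  next
    case 2
    then show ?thesis using near[of 0 1] dist_self[OF xS[of 0]] L assms(3) by simp
  next
    case 3
    then show ?thesis using near[of 0 1] dist_self[OF xS[of 1]] L assms(3) by simp
  qed
qed

lemma short_path_edge_detour:
  assumes F: "fault_set F" and path: "\<And>i. i < k \<Longrightarrow> {x i, x (Suc i)} \<in> E'"
    and inj: "inj_on x {..k}" and "2 \<le> k" and far: "x k \<notin> C {x 0, x 1}" and i: "i < k"
  shows "\<exists>u. walk (E - F) u \<and> hd u = x i \<and> last u = x (Suc i) \<and>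
    walk_length d u \<le> d (x i) (x (Suc i)) + 4 * (\<Sum>m<k. d (x m) (x (Suc m)))"
proof -
  define L where "L = (\<Sum>m<k. d (x m) (x (Suc m)))"
  let ?p = "x 0" and ?y = "x 1" and ?a = "x i" and ?b = "x (Suc i)"
  let ?C = "C {?p, ?y}"
  let ?Z = "(?C \<union> {?p, ?y}) - {?a, ?b}"
  have py: "{?p, ?y} \<in> E'" using path[of 0] assms(4) by simp
  have near: "d (x j) (x l) \<le> L" if "j \<le> k" "l \<le> k" for j l
    unfolding L_def using path_dist_le_length[where k = k and x = x, OF path _ that] assms(4) by simp
  have xS: "x j \<in> S" if "j \<le> k" for j
    using path_vertex_in_S[where k = k and x = x, OF path _ that] assms(4) by simp
  have "finite ?C" using C_subset[OF py] finite_S finite_subset by blast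
  then have "card (?C \<union> {?p, ?y}) = 2 * f + 1"
    using C_subset[OF py] card_C[OF py] spanner_edge[OF py] f_ge_1 by (subst card_Un_disjoint) auto
  moreover have "card {?a, ?b} \<le> 2" by (simp add: card_insert_if)
  ultimately have card_Z: "2 * f - 1 \<le> card ?Z"
    using diff_card_le_card_Diff[of "{?a, ?b}" "?C \<union> {?p, ?y}"] by simp
  have Z: "?Z \<subseteq> S - {?a, ?b}" using C_subset[OF py] spanner_edge[OF py] by auto
  have bound: "d ?a z + d z ?b \<le> 4 * L" if z: "z \<in> ?Z" for z
  proof -
    have "z \<in> S" using z Z by blast
    then have "d ?a z \<le> d ?a ?p + d ?p z" "d z ?b \<le> d z ?y + d ?y ?b"
      using xS[of i] xS[of 0] xS[of 1] xS[of "Suc i"] i assms(4) by (simp_all add: dist_triangle)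
    moreover have "d ?a ?p \<le> L" "d ?y ?b \<le> L" using near i assms(4) by simp_all
    moreover have "d ?p z + d z ?y \<le> 2 * L"
      unfolding L_def using first_edge_detour_le[where k = k and x = x, OF path inj assms(4) far] z by blast
    ultimately show ?thesis by linarith
  qed
  have "0 \<le> L" using near[of 0 0] dist_self[OF xS[of 0]] by simp
  then show ?thesis
    using detour_walk[OF F path[OF i] _ Z card_Z] bound unfolding L_def by simp
qed

text \<open>A path with fewer than \<open>2 f\<close> edges has too few vertices for windows; its faulty edges are
  bypassed through \<open>C {x 0, x 1}\<close> instead.\<close>
lemma short_path_detour:
  assumes F: "fault_set F" and path: "\<And>i. i < k \<Longrightarrow> {x i, x (Suc i)} \<in> E'"
    and inj: "inj_on x {..k}" and "2 \<le> k" and far: "x k \<notin> C {x 0, x 1}"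
  shows "\<exists>w. walk (E - F) w \<and> hd w = x 0 \<and> last w = x k \<and>
    walk_length d w \<le> (4 * real k + 1) * (\<Sum>m<k. d (x m) (x (Suc m)))"
proof -
  define L where "L = (\<Sum>m<k. d (x m) (x (Suc m)))"
  obtain w where w: "walk (E - F) w" "hd w = x 0" "last w = x k"
      "walk_length d w \<le> (\<Sum>i<k. d (x i) (x (Suc i)) + 4 * L)"
    using walk_chain[of k "E - F" x d "\<lambda>i. d (x i) (x (Suc i)) + 4 * L"]
      short_path_edge_detour[OF assms] unfolding L_def by blast
  moreover have "(\<Sum>i<k. d (x i) (x (Suc i)) + 4 * L) = (4 * real k + 1) * L"
    unfolding L_def by (simp add: sum.distrib algebra_simps)
  ultimately show ?thesis unfolding L_def by auto
qed

lemma path_detour: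
  assumes F: "fault_set F" and path: "\<And>i. i < k \<Longrightarrow> {x i, x (Suc i)} \<in> E'"
    and inj: "inj_on x {..k}" and "0 < k" and "{x 0, x k} \<notin> F"
  shows "\<exists>w. walk (E - F) w \<and> hd w = x 0 \<and> last w = x k \<and>
    walk_length d w \<le> (8 * real f + 2) * (\<Sum>m<k. d (x m) (x (Suc m)))"
proof -
  define L where "L = (\<Sum>m<k. d (x m) (x (Suc m)))"
  have "0 \<le> L" unfolding L_def
    using path_vertex_in_S[where k = k and x = x, OF path \<open>0 < k\<close>] dist_nonneg by (auto intro: sum_nonneg)
  then have L: "L \<le> (8 * real f + 2) * L" "(8 * real f - 1) * L \<le> (8 * real f + 2) * L"
    using mult_nonneg_nonneg[of "real f" L] by (simp_all add: algebra_simps)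
  show ?thesis
  proof (cases "2 * f \<le> k")
    case True
    then show ?thesis using long_path_detour[where k = k and x = x, OF F path inj True] L(2) unfolding L_def by force
  next
    case short: False
    show ?thesis
    proof (cases "{x 0, x k} \<in> E")
      case True
      have "d (x 0) (x k) \<le> L" unfolding L_def using path_dist_le_length[where k = k and x = x, OF path \<open>0 < k\<close>] by simp
      then show ?thesis unfolding L_def[symmetric]
        using True assms(5) L(1) by (intro exI[of _ "[x 0, x k]"]) auto
    next
      case False
      have "k \<noteq> 1" using False path[of 0] spanner_subset_construction by auto
      then have "2 \<le> k" using \<open>0 < k\<close> by linarith
      moreover have "x k \<notin> C {x 0, x 1}"
        using False spokes_in_construction[OF path[of 0]] \<open>0 < k\<close> by auto
      ultimately obtain w where "walk (E - F) w" "hd w = x 0" "last w = x k"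
          "walk_length d w \<le> (4 * real k + 1) * L"
        using short_path_detour[where k = k and x = x, OF F path inj] unfolding L_def by blast
      moreover have "(4 * real k + 1) * L \<le> (8 * real f + 2) * L"
        using short \<open>0 \<le> L\<close> by (intro mult_right_mono) auto
      ultimately show ?thesis unfolding L_def by force
    qed
  qed
qed

lemma shortest_spanner_path:
  assumes pq: "p \<in> S" "q \<in> S" "p \<noteq> q"
  obtains k x where "\<And>i. i < k \<Longrightarrow> {x i, x (Suc i)} \<in> E'" "inj_on x {..k}" "0 < k"
    "x 0 = p" "x k = q" "(\<Sum>m<k. d (x m) (x (Suc m))) \<le> t * d p q"
proof -
  have stretch: "sp_dist d E' p q \<le> ereal (t * d p q)"
    using spanner pq(1,2) by (simp add: is_t_spanner_def)
  have "\<exists>w. is_path E' p q w"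
  proof (rule ccontr)
    assume "\<nexists>w. is_path E' p q w"
    then show False using stretch sp_dist_no_path[of E' p q d] by simp
  qed
  moreover have "\<And>a b. {a, b} \<in> E' \<Longrightarrow> a \<in> S \<and> b \<in> S" using spanner_edge by blast
  ultimately obtain xs where xs: "is_path E' p q xs" "distinct xs"
      "sp_dist d E' p q = ereal (path_length d xs)"
    using sp_dist_attained[OF finite_S pq(1), of E' d q] dist_nonneg by blast
  define k where "k = length xs - 1"
  have length_xs: "length xs = Suc k" using xs(1) unfolding is_path_def k_def by simp
  show ?thesis
  proof
    show "{xs ! i, xs ! Suc i} \<in> E'" if "i < k" for i
      using xs(1) that length_xs unfolding is_path_def by auto
    show "inj_on ((!) xs) {..k}"
      using xs(2) length_xs unfolding inj_on_def by (auto simp: nth_eq_iff_index_eq)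
    show "xs ! 0 = p" "xs ! k = q"
      using xs(1) length_xs unfolding is_path_def by (auto simp: hd_conv_nth last_conv_nth)
    then show "0 < k" using pq(3) by (cases k) auto
    show "(\<Sum>m<k. d (xs ! m) (xs ! Suc m)) \<le> t * d p q"
      using stretch xs(3) length_xs unfolding path_length_def by simp
  qed
qed

lemma fault_free_walk:
  assumes F: "fault_set F" and pq: "p \<in> S" "q \<in> S" "p \<noteq> q" "{p, q} \<notin> F"
  shows "\<exists>w. walk (E - F) w \<and> hd w = p \<and> last w = q \<and>
    walk_length d w \<le> (8 * real f + 2) * t * d p q"
proof -
  obtain k x where path: "\<And>i. i < k \<Longrightarrow> {x i, x (Suc i)} \<in> E'" and "inj_on x {..k}" "0 < k"
      and ends: "x 0 = p" "x k = q" and length: "(\<Sum>m<k. d (x m) (x (Suc m))) \<le> t * d p q"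
    using shortest_spanner_path[OF pq(1-3)] by metis
  then obtain w where w: "walk (E - F) w" "hd w = p" "last w = q"
      "walk_length d w \<le> (8 * real f + 2) * (\<Sum>m<k. d (x m) (x (Suc m)))"
    using path_detour[where k = k and x = x, OF F path] pq(4) by blast
  have "(8 * real f + 2) * (\<Sum>m<k. d (x m) (x (Suc m))) \<le> (8 * real f + 2) * t * d p q"
    using length by (simp add: mult.assoc)
  then show ?thesis using w order_trans[OF w(4)] by blast
qed

theorem fault_degree_spanner_construction: "fault_degree_spanner S d f ((8 * real f + 2) * t) E"
  unfolding fault_degree_spanner_def graph_on_iff_subset_complete_edges
proof (intro conjI allI impI ballI construction_subset_complete_edges)
  fix F p q assume "F \<subseteq> E \<and> (\<forall>v\<in>S. degree F v \<le> f)" and "p \<in> S" "q \<in> S"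
  then have F: "fault_set F" by (simp add: fault_set_def)
  show "sp_dist d (E - F) p q \<le> ereal ((8 * real f + 2) * t) * sp_dist d (complete_edges S - F) p q"
  proof (rule sp_dist_le_stretch[OF finite_S \<open>p \<in> S\<close>])
    show "\<And>x y. {x, y} \<in> complete_edges S - F \<Longrightarrow> x \<in> S \<and> y \<in> S"
      by (simp add: doubleton_in_complete_edges_iff)
    show "\<And>x y. x \<in> S \<Longrightarrow> y \<in> S \<Longrightarrow> 0 \<le> d x y" by (rule dist_nonneg)
    show "0 < (8 * real f + 2) * t" using t_ge_1 by simp
  next
    fix x y assume "{x, y} \<in> complete_edges S - F"
    then have "x \<in> S" "y \<in> S" "x \<noteq> y" "{x, y} \<notin> F"
      by (simp_all add: doubleton_in_complete_edges_iff)
    then show "\<exists>u. walk (E - F) u \<and> hd u = x \<and> last u = y \<and>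
        walk_length d u \<le> (8 * real f + 2) * t * d x y"
      by (rule fault_free_walk[OF F])
  qed
qed

theorem card_construction: "card E \<le> (4 * f - 1) * card E'"
proof -
  have "card E \<le> (2 * (2 * f - 1) + 1) * card E'"
  proof (rule card_construction_le)
    show "finite E'" using finite_construction spanner_subset_construction finite_subset by blast
  next
    fix e assume e: "e \<in> E'"
    then have "e \<in> complete_edges S" using spanner_subset_complete_edges by blast
    then obtain a b where ab: "e = {a, b}" unfolding complete_edges_def by blast
    then have ab_E': "{a, b} \<in> E'" using e by simp
    show "card e = 2" using ab spanner_edge[OF ab_E'] by simp
    have "finite (C {a, b})" using C_subset[OF ab_E'] finite_S finite_subset by blast
    then show "finite (C e) \<and> card (C e) \<le> 2 * f - 1" using ab card_C[OF ab_E'] by simp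
  qed
  moreover have "2 * (2 * f - 1) + 1 = 4 * f - 1" using f_ge_1 by simp
  ultimately show ?thesis by (simp only:)
qed

end

theorem theorem2:
  fixes S :: "'a set" and d :: "'a \<Rightarrow> 'a \<Rightarrow> real" and t :: real
    and E' :: "'a set set" and f :: nat and C :: "'a set \<Rightarrow> 'a set"
  assumes "finite_metric_space S d"
    and "t \<ge> 1"
    and "is_t_spanner S d t E'"
    and "1 \<le> f" and "real f \<le> (real (card S) - 1) / 2"
    and "valid_C S d f E' C"
  shows "fault_degree_spanner S d f ((8 * real f + 2) * t) (construction E' C)
       \<and> card (construction E' C) \<le> (4 * f - 1) * card E'"
proof -
  have "real (2 * f + 1) \<le> real (card S)" using assms(5) by (simp add: field_simps)
  then have "2 * f + 1 \<le> card S" by (simp only: of_nat_le_iff)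
  then interpret spanner_construction S d t E' f C using assms by unfold_locales auto
  show ?thesis using fault_degree_spanner_construction card_construction by blast
qed

end
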